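(* Let $d\ge2$ and $\epsilon>0$. Suppose that for each $t\in[0,\epsilon]$ there are unit vectors $|x(t)\rangle, |y(t)\rangle\in\mathbb{C}^d$, depending continuously on $t$, such that $$\frac{1}{d^2}\sum_{\mathbf{a}\in\{0,\dots,d-1\}^2} (W_\mathbf{a}\otimes W_\mathbf{a})\big(|x(t)\rangle\langle x(t)|\otimes|y(t)\rangle\langle y(t)|\big)(W_\mathbf{a}\otimes W_\mathbf{a})^\dagger = \frac{t}{d}U_{SW} + \frac{1-t}{d^2}I_{d^2}$$ for all $t\in[0,\epsilon]$, and $|x(0)\rangle = |0\rangle$, $|y(0)\rangle = F|0\rangle$. Then this family (i.e. the pair of WH covariant frames $\{W_\mathbf{a}|x(t)\rangle\}$, $\{W_\mathbf{a}|y(t)\rangle\}$, described by the projectors $|x(t)\rangle\langle x(t)|$ and $|y(t)\rangle\langle y(t)|$) cannot be (right-)differentiable at $t=0$.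
   Context: $\{|i\rangle\}_{i=0}^{d-1}$ is the standard basis of $\mathbb{C}^d$, indices mod $d$. Let $\tau=\exp(2\pi i\frac{d+1}{2d})$, $\omega=\tau^2=\exp(2\pi i/d)$, $S=\sum_{i=0}^{d-1}|i+1\rangle\langle i|$, $C=\sum_{i=0}^{d-1}\omega^i|i\rangle\langle i|$, and for $\mathbf{a}=(a_1,a_2)\in\mathbb{Z}^2$ let $W_\mathbf{a}=\tau^{a_1a_2}S^{a_1}C^{a_2}$ (Weyl–Heisenberg operators). $F=\frac{1}{\sqrt d}\sum_{k,l=0}^{d-1}\omega^{kl}|k\rangle\langle l|$ is the discrete Fourier transform. $U_{SW}$ is the swap operator on $\mathbb{C}^d\otimes\mathbb{C}^d$. *)

theory Defs
  imports "HOL-Analysis.Analysis"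
begin

text \<open>Concrete linear algebra on \<open>\<complex>\<^sup>d\<close>: vectors are functions \<open>nat \<Rightarrow> complex\<close>
  (only indices \<open>< d\<close> matter), matrices are functions \<open>nat \<Rightarrow> nat \<Rightarrow> complex\<close>
  (only indices \<open>< n\<close> matter, where n is the dimension). The tensor product
  \<open>\<complex>\<^sup>d \<otimes> \<complex>\<^sup>d\<close> is identified with \<open>\<complex>\<^sup>d\<^sup>2\<close> via \<open>|i\<rangle>|j\<rangle> \<mapsto> |i*d+j\<rangle>\<close>.\<close>

type_synonym cvec = "nat \<Rightarrow> complex"
type_synonym cmat = "nat \<Rightarrow> nat \<Rightarrow> complex"

definition mat_mult :: "nat \<Rightarrow> cmat \<Rightarrow> cmat \<Rightarrow> cmat" where
  "mat_mult n A B = (\<lambda>i j. \<Sum>k<n. A i k * B k j)"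

definition mat_vec :: "nat \<Rightarrow> cmat \<Rightarrow> cvec \<Rightarrow> cvec" where
  "mat_vec n A v = (\<lambda>i. \<Sum>k<n. A i k * v k)"

definition mat_adj :: "cmat \<Rightarrow> cmat" where
  "mat_adj A = (\<lambda>i j. cnj (A j i))"

definition id_mat :: cmat where
  "id_mat = (\<lambda>i j. if i = j then 1 else 0)"

definition mat_pow :: "nat \<Rightarrow> cmat \<Rightarrow> nat \<Rightarrow> cmat" where
  "mat_pow n A k = ((mat_mult n A) ^^ k) id_mat"

definition kron :: "nat \<Rightarrow> cmat \<Rightarrow> cmat \<Rightarrow> cmat" where
  "kron d A B = (\<lambda>i j. A (i div d) (j div d) * B (i mod d) (j mod d))"

definition outer :: "cvec \<Rightarrow> cvec \<Rightarrow> cmat" where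
  "outer x y = (\<lambda>i j. x i * cnj (y j))"

definition ket :: "nat \<Rightarrow> cvec" where
  "ket k = (\<lambda>i. if i = k then 1 else 0)"

definition wh_tau :: "nat \<Rightarrow> complex" where
  "wh_tau d = exp (2 * of_real pi * \<i> * (of_nat d + 1) / (2 * of_nat d))"

definition wh_omega :: "nat \<Rightarrow> complex" where
  "wh_omega d = (wh_tau d) ^ 2"

definition shift_op :: "nat \<Rightarrow> cmat" where
  "shift_op d = (\<lambda>i j. if i = (j + 1) mod d then 1 else 0)"

definition clock_op :: "nat \<Rightarrow> cmat" where
  "clock_op d = (\<lambda>i j. if i = j then (wh_omega d) ^ i else 0)"

definition weyl :: "nat \<Rightarrow> nat \<Rightarrow> nat \<Rightarrow> cmat" where
  "weyl d a1 a2 = (\<lambda>i j. (wh_tau d) ^ (a1 * a2) *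
      mat_mult d (mat_pow d (shift_op d) a1) (mat_pow d (clock_op d) a2) i j)"

definition dft :: "nat \<Rightarrow> cmat" where
  "dft d = (\<lambda>k l. (wh_omega d) ^ (k * l) / of_real (sqrt (real d)))"

definition swap_op :: "nat \<Rightarrow> cmat" where
  "swap_op d = (\<lambda>I J. if I div d = J mod d \<and> I mod d = J div d then 1 else 0)"

definition wh_twirl :: "nat \<Rightarrow> cmat \<Rightarrow> cmat" where
  "wh_twirl d \<rho> = (\<lambda>I J. (1 / of_nat (d^2)) * (\<Sum>a1<d. \<Sum>a2<d.
      mat_mult (d^2) (mat_mult (d^2) (kron d (weyl d a1 a2) (weyl d a1 a2)) \<rho>)
        (mat_adj (kron d (weyl d a1 a2) (weyl d a1 a2))) I J))"

end

theory Submission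
  imports Defs
begin

text \<open>Write \<open>A = |x\<rangle>\<langle>x|\<close>, \<open>B = |y\<rangle>\<langle>y|\<close>. Conjugation by \<open>W\<^sub>a \<otimes> W\<^sub>a\<close> translates both tensor
  factors by \<open>a\<^sub>1\<close> and multiplies the entry at \<open>(i\<^sub>1,i\<^sub>2),(j\<^sub>1,j\<^sub>2)\<close> by a power of
  \<open>\<omega>\<^sup>a\<^sup>2\<close> depending only on \<open>i\<^sub>1 + i\<^sub>2 - j\<^sub>1 - j\<^sub>2\<close>; so where \<open>i\<^sub>1 + i\<^sub>2 = j\<^sub>1 + j\<^sub>2\<close> (mod d)
  the twirl is the average of the translates of \<open>A \<otimes> B\<close>. Reading off the entries at
  \<open>(c,1),(c+1,0)\<close> and summing them against \<open>\<omega>\<^sup>c\<close> turns the hypothesis into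
  \<open>tr(A S C) tr(B (S C)\<^sup>\<dagger>) = t\<close>. Both factors vanish at \<open>t = 0\<close>, since \<open>S C |0\<rangle> = |1\<rangle>\<close> and
  \<open>F |0\<rangle>\<close> is flat while \<open>\<Sum>\<^sub>k \<omega>\<^sup>k = 0\<close>; so if \<open>A\<close> and \<open>B\<close> were differentiable at \<open>0\<close>,
  the product rule would give their product \<open>t\<close> the derivative \<open>0\<close>.\<close>

lemma mod_add_right_cancel_less:
  fixes k k' a d :: nat
  assumes "k < d" "k' < d" "(k + a) mod d = (k' + a) mod d"
  shows "k = k'"
proof -
  have "k mod d = k' mod d"
    using assms(3) by (simp add: mod_eq_iff_dvd_symdiff_nat)
  then show ?thesis
    using assms(1,2) by simp
qed

lemma sum_lessThan_reflect_mod: "(\<Sum>a<d. G a) = (\<Sum>k<d. G ((d - k) mod (d :: nat)))"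
proof -
  have reflect_reflect: "(d - (d - k) mod d) mod d = k" if "k < d" for k
    using that by (cases "k = 0") auto
  show ?thesis
    by (rule sum.reindex_bij_witness[of _ "\<lambda>k. (d - k) mod d" "\<lambda>k. (d - k) mod d"])
      (auto simp: reflect_reflect)
qed

lemma sum_lessThan_rotate_mod: "(\<Sum>c<d. F ((c + k) mod d)) = (\<Sum>j<d. F j)" for d :: nat
proof -
  have inj: "inj_on (\<lambda>c. (c + k) mod d) {..<d}"
    by (rule inj_onI) (metis lessThan_iff mod_add_right_cancel_less)
  have "(\<lambda>c. (c + k) mod d) ` {..<d} = {..<d}"
    by (rule endo_inj_surj[OF _ _ inj]) auto
  then show ?thesis
    using sum.reindex[OF inj, of F] by simp
qed

lemma mat_mult_apply: "mat_mult n A B i j = (\<Sum>k<n. A i k * B k j)"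
  by (simp add: mat_mult_def)

lemma mult_cnj_eq_1_if_norm_1: "norm (z :: complex) = 1 \<Longrightarrow> z * cnj z = 1"
  using complex_norm_square[of z] by simp

lemma norm_wh_tau [simp]: "norm (wh_tau d) = 1"
  unfolding wh_tau_def by (simp add: norm_exp_eq_Re)

lemma norm_wh_omega [simp]: "norm (wh_omega d) = 1"
  by (simp add: wh_omega_def norm_power)

lemma wh_omega_power:
  assumes "0 < d"
  shows "wh_omega d ^ n = exp (2 * of_real pi * \<i> * of_nat (n * (d + 1)) / of_nat d)"
proof -
  have "wh_omega d ^ n = wh_tau d ^ (2 * n)"
    by (simp add: wh_omega_def power_mult)
  also have "\<dots> = exp (of_nat (2 * n) * (2 * of_real pi * \<i> * (of_nat d + 1) / (2 * of_nat d)))"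
    unfolding wh_tau_def by (rule exp_of_nat_mult[symmetric])
  also have "of_nat (2 * n) * (2 * of_real pi * \<i> * (of_nat d + 1) / (2 * of_nat d))
      = 2 * of_real pi * \<i> * of_nat (n * (d + 1)) / (of_nat d :: complex)"
    using assms by (simp add: field_simps)
  finally show ?thesis .
qed

lemma wh_omega_power_eq_iff:
  assumes "0 < d"
  shows "wh_omega d ^ m = wh_omega d ^ n \<longleftrightarrow> m mod d = n mod d"
proof -
  have "k * (d + 1) mod d = k mod d" for k
    by (simp add: algebra_simps)
  then show ?thesis
    using assms by (simp only: wh_omega_power complex_root_unity_eq Suc_le_eq One_nat_def)
qed

lemma wh_omega_power_mult_cnj:
  assumes "0 < d" "m mod d = n mod d"
  shows "wh_omega d ^ m * cnj (wh_omega d ^ n) = 1"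
  using assms wh_omega_power_eq_iff[of d m n]
  by (metis mult_cnj_eq_1_if_norm_1 norm_power norm_wh_omega power_one)

lemma sum_wh_omega_powers:
  assumes "2 \<le> d"
  shows "(\<Sum>k<d. wh_omega d ^ k) = 0"
proof -
  have "wh_omega d \<noteq> 1" and "wh_omega d ^ d = 1"
    using assms wh_omega_power_eq_iff[of d 1 0] wh_omega_power_eq_iff[of d d 0] by auto
  then show ?thesis
    by (simp add: geometric_sum)
qed

lemma mat_pow_shift_op:
  assumes "i < d" "j < d"
  shows "mat_pow d (shift_op d) n i j = (if i = (j + n) mod d then 1 else 0)"
  using assms(1)
proof (induction n arbitrary: i)
  case 0
  then show ?case
    using assms by (simp add: mat_pow_def id_mat_def)
next
  case (Suc n)
  have "mat_pow d (shift_op d) (Suc n) i j = (\<Sum>k<d. shift_op d i k * mat_pow d (shift_op d) n k j)"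
    by (simp add: mat_pow_def mat_mult_def)
  also have "\<dots> = (\<Sum>k<d. if k = (j + n) mod d then shift_op d i k else 0)"
    by (rule sum.cong) (simp_all add: Suc.IH)
  also have "\<dots> = (if i = (j + Suc n) mod d then 1 else 0)"
    using assms by (simp add: shift_op_def mod_Suc_eq)
  finally show ?case .
qed

lemma mat_pow_clock_op:
  assumes "i < d" "j < d"
  shows "mat_pow d (clock_op d) n i j = (if i = j then wh_omega d ^ (i * n) else 0)"
  using assms(1)
proof (induction n arbitrary: i)
  case 0
  then show ?case
    using assms by (simp add: mat_pow_def id_mat_def)
next
  case (Suc n)
  have "mat_pow d (clock_op d) (Suc n) i j = (\<Sum>k<d. clock_op d i k * mat_pow d (clock_op d) n k j)"
    by (simp add: mat_pow_def mat_mult_def)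
  also have "\<dots> = (\<Sum>k<d. if k = i then wh_omega d ^ i * mat_pow d (clock_op d) n k j else 0)"
    by (rule sum.cong) (auto simp: clock_op_def)
  also have "\<dots> = wh_omega d ^ i * mat_pow d (clock_op d) n i j"
    using Suc.prems by simp
  finally show ?case
    using Suc by (simp add: power_add)
qed

lemma weyl_entry:
  assumes "i < d" "j < d"
  shows "weyl d a1 a2 i j
    = (if i = (j + a1) mod d then wh_tau d ^ (a1 * a2) * wh_omega d ^ (j * a2) else 0)"
proof -
  have "mat_mult d (mat_pow d (shift_op d) a1) (mat_pow d (clock_op d) a2) i j
      = (\<Sum>k<d. if k = j then (if i = (k + a1) mod d then wh_omega d ^ (j * a2) else 0) else 0)"
    unfolding mat_mult_def
    by (rule sum.cong) (auto simp: mat_pow_shift_op mat_pow_clock_op assms)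
  then show ?thesis
    using assms by (simp add: weyl_def)
qed

lemma weyl_shifted_entry:
  assumes "k < d" "j < d"
  shows "weyl d a1 a2 ((k + a1) mod d) j
    = (if j = k then wh_tau d ^ (a1 * a2) * wh_omega d ^ (k * a2) else 0)"
  using assms by (auto simp: weyl_entry dest: mod_add_right_cancel_less)

lemma weyl_conj_shifted_entry:
  assumes "k < d" "l < d"
  shows "mat_mult d (mat_mult d (weyl d a1 a2) X) (mat_adj (weyl d a1 a2))
           ((k + a1) mod d) ((l + a1) mod d)
       = wh_omega d ^ (k * a2) * cnj (wh_omega d ^ (l * a2)) * X k l"
proof -
  let ?c = "wh_tau d ^ (a1 * a2)"
  have row: "mat_mult d (weyl d a1 a2) X ((k + a1) mod d) j = ?c * wh_omega d ^ (k * a2) * X k j"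
    for j
  proof -
    have "mat_mult d (weyl d a1 a2) X ((k + a1) mod d) j
        = (\<Sum>i<d. if i = k then ?c * wh_omega d ^ (k * a2) * X k j else 0)"
      unfolding mat_mult_def using assms by (intro sum.cong refl) (simp add: weyl_shifted_entry)
    then show ?thesis
      using assms by simp
  qed
  have "mat_mult d (mat_mult d (weyl d a1 a2) X) (mat_adj (weyl d a1 a2))
           ((k + a1) mod d) ((l + a1) mod d)
      = (\<Sum>j<d. if j = l then (?c * cnj ?c) * wh_omega d ^ (k * a2)
                                * cnj (wh_omega d ^ (l * a2)) * X k l else 0)"
    unfolding mat_mult_apply[of d "mat_mult d (weyl d a1 a2) X"] mat_adj_def row using assms
    by (intro sum.cong refl) (simp add: weyl_shifted_entry mult_ac)
  moreover have "?c * cnj ?c = 1"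
    by (rule mult_cnj_eq_1_if_norm_1) (simp add: norm_power)
  ultimately show ?thesis
    using assms by (simp only: mult_1_left sum.delta finite_lessThan lessThan_iff if_True)
qed

lemma kron_entry:
  assumes "i2 < d" "j2 < d"
  shows "kron d P Q (i1 * d + i2) (j1 * d + j2) = P i1 j1 * Q i2 j2"
  using assms by (simp add: kron_def)

lemma mat_adj_kron: "mat_adj (kron d P Q) = kron d (mat_adj P) (mat_adj Q)"
  by (simp add: fun_eq_iff mat_adj_def kron_def)

lemma mat_mult_kron:
  "mat_mult (d^2) (kron d P Q) (kron d R S) = kron d (mat_mult d P R) (mat_mult d Q S)"
proof (intro ext)
  fix I J
  have "mat_mult (d^2) (kron d P Q) (kron d R S) I J
      = (\<Sum>k1<d. \<Sum>k2<d. kron d P Q I (k2 + k1 * d) * kron d R S (k2 + k1 * d) J)"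
    unfolding mat_mult_def power2_eq_square by (rule sum_mult_product)
  also have "\<dots> = (\<Sum>k1<d. \<Sum>k2<d. (P (I div d) k1 * R k1 (J div d))
                                    * (Q (I mod d) k2 * S k2 (J mod d)))"
    by (intro sum.cong refl) (simp add: kron_def mult_ac)
  also have "\<dots> = kron d (mat_mult d P R) (mat_mult d Q S) I J"
    by (simp add: kron_def mat_mult_def sum_product)
  finally show "mat_mult (d^2) (kron d P Q) (kron d R S) I J
      = kron d (mat_mult d P R) (mat_mult d Q S) I J" .
qed

lemma mod_add_reflect:
  fixes i k d :: nat
  assumes "i < d" "k < d"
  shows "((i + k) mod d + (d - k) mod d) mod d = i"
proof -
  have "((i + k) mod d + (d - k) mod d) mod d = (i + (k + (d - k))) mod d"
    by (simp add: mod_add_eq add.assoc)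
  then show ?thesis
    using assms by simp
qed

lemma weyl_conj_reflected_entry:
  assumes "i < d" "j < d" "k < d"
  shows "mat_mult d (mat_mult d (weyl d ((d - k) mod d) a2) X) (mat_adj (weyl d ((d - k) mod d) a2)) i j
    = wh_omega d ^ ((i + k) mod d * a2) * cnj (wh_omega d ^ ((j + k) mod d * a2))
      * X ((i + k) mod d) ((j + k) mod d)"
  using weyl_conj_shifted_entry[of "(i + k) mod d" d "(j + k) mod d" "(d - k) mod d" a2 X] assms
  unfolding mod_add_reflect[OF assms(1,3)] mod_add_reflect[OF assms(2,3)] by simp

lemma wh_omega_translated_phase:
  assumes "0 < d" "(i1 + i2) mod d = (j1 + j2) mod d"
  shows "wh_omega d ^ ((i1 + k) mod d * a) * wh_omega d ^ ((i2 + k) mod d * a)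
    * cnj (wh_omega d ^ ((j1 + k) mod d * a) * wh_omega d ^ ((j2 + k) mod d * a)) = 1"
proof -
  have translate: "((i + k) mod d + (j + k) mod d) mod d = ((i + j) mod d + 2 * k) mod d" for i j
  proof -
    have "((i + k) mod d + (j + k) mod d) mod d = (i + j + 2 * k) mod d"
      by (simp add: mod_add_eq mult_2 add_ac)
    then show ?thesis
      by (simp add: mod_add_left_eq)
  qed
  have "((i1 + k) mod d + (i2 + k) mod d) mod d = ((j1 + k) mod d + (j2 + k) mod d) mod d"
    unfolding translate assms(2) ..
  then have "((i1 + k) mod d + (i2 + k) mod d) * a mod d = ((j1 + k) mod d + (j2 + k) mod d) * a mod d"
    by (metis mod_mult_left_eq)
  then show ?thesis
    unfolding power_add[symmetric] add_mult_distrib[symmetric] by (rule wh_omega_power_mult_cnj[OF assms(1)])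
qed

lemma wh_twirl_kron_entry:
  assumes "i1 < d" "i2 < d" "j1 < d" "j2 < d" "(i1 + i2) mod d = (j1 + j2) mod d"
  shows "wh_twirl d (kron d A B) (i1 * d + i2) (j1 * d + j2)
    = (\<Sum>k<d. A ((i1 + k) mod d) ((j1 + k) mod d) * B ((i2 + k) mod d) ((j2 + k) mod d))
      / of_nat d"
proof -
  define conjugated where "conjugated a1 a2 X = mat_mult d (mat_mult d (weyl d a1 a2) X) (mat_adj (weyl d a1 a2))"
    for a1 a2 X
  define T where "T k = A ((i1 + k) mod d) ((j1 + k) mod d) * B ((i2 + k) mod d) ((j2 + k) mod d)"
    for k
  have d: "0 < d"
    using assms by simp
  have conjugated_T: "conjugated ((d - k) mod d) a2 A i1 j1 * conjugated ((d - k) mod d) a2 B i2 j2 = T k"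
    if "k < d" for k a2
    using wh_omega_translated_phase[OF d assms(5), of k a2] that assms
    unfolding conjugated_def T_def by (simp add: weyl_conj_reflected_entry mult_ac)
  have "wh_twirl d (kron d A B) (i1 * d + i2) (j1 * d + j2)
      = (\<Sum>a1<d. \<Sum>a2<d. conjugated a1 a2 A i1 j1 * conjugated a1 a2 B i2 j2) / of_nat (d^2)"
    using assms by (simp add: wh_twirl_def conjugated_def mat_mult_kron mat_adj_kron kron_entry)
  also have "\<dots> = (\<Sum>k<d. \<Sum>a2<d. T k) / of_nat (d^2)"
    by (subst sum_lessThan_reflect_mod) (simp add: conjugated_T)
  also have "\<dots> = (\<Sum>k<d. T k) / of_nat d"
    using d by (simp add: sum_distrib_left[symmetric] power2_eq_square)
  finally show ?thesis
    unfolding T_def .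
qed

lemma index_pair_less:
  fixes i j d :: nat
  assumes "i < d" "j < d"
  shows "i * d + j < d^2"
proof -
  have "i * d + j < (i + 1) * d"
    using assms(2) by simp
  also have "\<dots> \<le> d * d"
    using assms(1) by (intro mult_right_mono) auto
  finally show ?thesis
    by (simp add: power2_eq_square)
qed

lemma wh_twirl_eq_imp_translated_correlation:
  assumes "2 \<le> d" "c < d"
    and twirl: "\<forall>I<d^2. \<forall>J<d^2. wh_twirl d (kron d A B) I J
        = of_real (t / real d) * swap_op d I J + of_real ((1 - t) / real (d^2)) * id_mat I J"
  shows "(\<Sum>k<d. A ((c + k) mod d) ((c + k + 1) mod d) * B ((k + 1) mod d) k)
    = (if c = 0 then of_real t else 0)"
proof -
  let ?I = "c * d + 1" and ?J = "(c + 1) mod d * d + 0"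
  let ?S = "\<Sum>k<d. A ((c + k) mod d) ((c + k + 1) mod d) * B ((k + 1) mod d) k"
  have d: "0 < d" "1 < d"
    using assms(1) by auto
  have pair: "(i * d + j) div d = i" "(i * d + j) mod d = j" if "j < d" for i j
    using that by simp_all
  have I: "?I div d = c" "?I mod d = 1" and J: "?J div d = (c + 1) mod d" "?J mod d = 0"
    using pair d by blast+
  have "?I < d^2" "?J < d^2"
    using index_pair_less[of c d 1] index_pair_less[of "(c + 1) mod d" d 0] assms(2) d by simp_all
  have "(\<Sum>k<d. A ((c + k) mod d) (((c + 1) mod d + k) mod d) * B ((1 + k) mod d) ((0 + k) mod d))
      = ?S"
    by (intro sum.cong refl)
      (simp only: mod_add_left_eq mod_add_right_eq add_ac add_0_left add_0_right lessThan_iff mod_less)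
  then have "?S / of_nat d = wh_twirl d (kron d A B) ?I ?J"
    using wh_twirl_kron_entry[of c d 1 "(c + 1) mod d" 0 A B] assms(2) d by simp
  also have "\<dots> = of_real (t / real d) * swap_op d ?I ?J
      + of_real ((1 - t) / real (d^2)) * id_mat ?I ?J"
    using twirl \<open>?I < d^2\<close> \<open>?J < d^2\<close> by blast
  also have "swap_op d ?I ?J = (if c = 0 then 1 else 0)"
    using I J assms(2) d by (auto simp: swap_op_def)
  also have "id_mat ?I ?J = 0"
    using I J by (auto simp: id_mat_def)
  finally have "?S / of_nat d = of_real t / of_nat d * (if c = 0 then 1 else 0)"
    by (simp add: of_real_divide)
  then show ?thesis
    using d by (cases "c = 0") simp_all
qed

text \<open>\<open>tr(X S C)\<close> and \<open>tr(X (S C)\<^sup>\<dagger>)\<close>.\<close>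

definition trace_shift_clock :: "nat \<Rightarrow> cmat \<Rightarrow> complex" where
  "trace_shift_clock d X = (\<Sum>j<d. wh_omega d ^ j * X j ((j + 1) mod d))"

definition trace_shift_clock_adj :: "nat \<Rightarrow> cmat \<Rightarrow> complex" where
  "trace_shift_clock_adj d X = (\<Sum>k<d. cnj (wh_omega d) ^ k * X ((k + 1) mod d) k)"

lemma trace_shift_clock_translated:
  assumes "0 < d"
  shows "(\<Sum>c<d. wh_omega d ^ c * A ((c + k) mod d) ((c + k + 1) mod d))
    = cnj (wh_omega d) ^ k * trace_shift_clock d A"
proof -
  define F where "F j = wh_omega d ^ j * A j ((j + 1) mod d)" for j
  have "wh_omega d ^ c * A ((c + k) mod d) ((c + k + 1) mod d) = cnj (wh_omega d) ^ k * F ((c + k) mod d)"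
    for c
  proof -
    have "wh_omega d ^ ((c + k) mod d) = wh_omega d ^ c * wh_omega d ^ k"
      using wh_omega_power_eq_iff[OF assms, of "(c + k) mod d" "c + k"] by (simp add: power_add)
    moreover have "wh_omega d ^ k * cnj (wh_omega d) ^ k = 1"
      using wh_omega_power_mult_cnj[OF assms, of k k] by simp
    moreover have "(c + k + 1) mod d = ((c + k) mod d + 1) mod d"
      by (simp add: mod_Suc_eq)
    ultimately show ?thesis
      unfolding F_def by (simp add: mult_ac)
  qed
  then have "(\<Sum>c<d. wh_omega d ^ c * A ((c + k) mod d) ((c + k + 1) mod d))
      = cnj (wh_omega d) ^ k * (\<Sum>c<d. F ((c + k) mod d))"
    by (simp add: sum_distrib_left)
  also have "(\<Sum>c<d. F ((c + k) mod d)) = trace_shift_clock d A"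
    unfolding sum_lessThan_rotate_mod[of F] by (simp add: trace_shift_clock_def F_def)
  finally show ?thesis .
qed

lemma trace_shift_clock_mult_adj:
  assumes "0 < d"
  shows "trace_shift_clock d A * trace_shift_clock_adj d B
    = (\<Sum>c<d. wh_omega d ^ c
              * (\<Sum>k<d. A ((c + k) mod d) ((c + k + 1) mod d) * B ((k + 1) mod d) k))"
proof -
  let ?a = "\<lambda>c k. wh_omega d ^ c * A ((c + k) mod d) ((c + k + 1) mod d)"
  have "(\<Sum>c<d. wh_omega d ^ c
              * (\<Sum>k<d. A ((c + k) mod d) ((c + k + 1) mod d) * B ((k + 1) mod d) k))
      = (\<Sum>c<d. \<Sum>k<d. ?a c k * B ((k + 1) mod d) k)"
    by (simp add: sum_distrib_left mult.assoc)
  also have "\<dots> = (\<Sum>k<d. (\<Sum>c<d. ?a c k) * B ((k + 1) mod d) k)"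
    by (subst sum.swap) (simp only: sum_distrib_right)
  also have "\<dots> = (\<Sum>k<d. trace_shift_clock d A * (cnj (wh_omega d) ^ k * B ((k + 1) mod d) k))"
    by (simp only: trace_shift_clock_translated[OF assms]) (simp add: mult_ac)
  finally show ?thesis
    by (simp add: trace_shift_clock_adj_def sum_distrib_left)
qed

lemma wh_twirl_eq_imp_trace_shift_clock_product:
  assumes "2 \<le> d"
    and "\<forall>I<d^2. \<forall>J<d^2. wh_twirl d (kron d A B) I J
        = of_real (t / real d) * swap_op d I J + of_real ((1 - t) / real (d^2)) * id_mat I J"
  shows "trace_shift_clock d A * trace_shift_clock_adj d B = of_real t"
proof -
  have d: "0 < d"
    using assms(1) by simp
  have "trace_shift_clock d A * trace_shift_clock_adj d B
      = (\<Sum>c<d. wh_omega d ^ c * (if c = 0 then of_real t else 0))"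
    unfolding trace_shift_clock_mult_adj[OF d]
    using wh_twirl_eq_imp_translated_correlation[OF assms(1) _ assms(2)] by simp
  also have "\<dots> = of_real t"
    using assms(1) by (simp add: if_distrib sum.delta cong: if_cong)
  finally show ?thesis .
qed

lemma trace_shift_clock_outer_ket_0:
  assumes "2 \<le> d" "\<forall>i<d. u i = ket 0 i"
  shows "trace_shift_clock d (outer u u) = 0"
  unfolding trace_shift_clock_def
proof (intro sum.neutral ballI)
  fix j
  assume "j \<in> {..<d}"
  moreover have "j = 0 \<longrightarrow> (j + 1) mod d \<noteq> 0"
    using assms(1) by simp
  ultimately show "wh_omega d ^ j * outer u u j ((j + 1) mod d) = 0"
    using assms by (simp add: outer_def ket_def)
qed

lemma trace_shift_clock_adj_outer_flat:
  assumes "2 \<le> d" "\<forall>i<d. v i = z"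
  shows "trace_shift_clock_adj d (outer v v) = 0"
proof -
  have "trace_shift_clock_adj d (outer v v) = cnj (\<Sum>k<d. wh_omega d ^ k) * (z * cnj z)"
    using assms by (simp add: trace_shift_clock_adj_def outer_def sum_distrib_right)
  then show ?thesis
    using sum_wh_omega_powers[OF assms(1)] by simp
qed

lemma dft_ket_0:
  assumes "i < d"
  shows "mat_vec d (dft d) (ket 0) i = 1 / of_real (sqrt (real d))"
proof -
  have "mat_vec d (dft d) (ket 0) i = (\<Sum>k<d. if k = 0 then dft d i k else 0)"
    unfolding mat_vec_def ket_def by (intro sum.cong) auto
  then show ?thesis
    using assms by (simp add: dft_def)
qed

lemma vanishing_differentiable_factors_not_id:
  fixes f g :: "real \<Rightarrow> complex"
  assumes "\<epsilon> > 0"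
    and "f differentiable (at 0 within {0..\<epsilon>})" "g differentiable (at 0 within {0..\<epsilon>})"
    and "f 0 = 0" "g 0 = 0"
  shows "\<not> (\<forall>t\<in>{0..\<epsilon>}. f t * g t = of_real t)"
proof
  assume product: "\<forall>t\<in>{0..\<epsilon>}. f t * g t = of_real t"
  obtain f' g' where "(f has_vector_derivative f') (at 0 within {0..\<epsilon>})"
    and "(g has_vector_derivative g') (at 0 within {0..\<epsilon>})"
    using assms(2,3) vector_derivative_works by blast
  then have "((\<lambda>t. f t * g t) has_vector_derivative 0) (at 0 within {0..\<epsilon>})"
    using has_vector_derivative_mult assms(4,5) by fastforce
  moreover have "((\<lambda>t. f t * g t) has_vector_derivative 1) (at 0 within {0..\<epsilon>})"
  proof (rule has_vector_derivative_transform[where f = "\<lambda>t. of_real t"])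
    show "((\<lambda>t. complex_of_real t) has_vector_derivative 1) (at 0 within {0..\<epsilon>})"
      using has_vector_derivative_of_real[OF DERIV_ident] by simp
  qed (use product assms(1) in auto)
  moreover have "at (0::real) within {0..\<epsilon>} \<noteq> bot"
    using assms(1) by (simp add: at_within_Icc_at_right)
  ultimately show False
    using vector_derivative_unique_within by fastforce
qed

theorem proposition4:
  fixes d :: nat and \<epsilon> :: real and x y :: "real \<Rightarrow> cvec"
  assumes "d \<ge> 2" and "\<epsilon> > 0"
    and unit_x: "\<forall>t\<in>{0..\<epsilon>}. (\<Sum>i<d. (cmod (x t i))^2) = 1"
    and unit_y: "\<forall>t\<in>{0..\<epsilon>}. (\<Sum>i<d. (cmod (y t i))^2) = 1"
    and cont_x: "\<forall>i<d. continuous_on {0..\<epsilon>} (\<lambda>t. x t i)"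
    and cont_y: "\<forall>i<d. continuous_on {0..\<epsilon>} (\<lambda>t. y t i)"
    and twirl: "\<forall>t\<in>{0..\<epsilon>}. \<forall>I<d^2. \<forall>J<d^2.
        wh_twirl d (kron d (outer (x t) (x t)) (outer (y t) (y t))) I J
        = of_real (t / real d) * swap_op d I J
          + of_real ((1 - t) / real (d^2)) * id_mat I J"
    and x0: "\<forall>i<d. x 0 i = ket 0 i"
    and y0: "\<forall>i<d. y 0 i = mat_vec d (dft d) (ket 0) i"
  shows "\<not> ((\<forall>i<d. \<forall>j<d. (\<lambda>t. outer (x t) (x t) i j) differentiable (at 0 within {0..\<epsilon>}))
          \<and> (\<forall>i<d. \<forall>j<d. (\<lambda>t. outer (y t) (y t) i j) differentiable (at 0 within {0..\<epsilon>})))"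
proof
  assume diff: "(\<forall>i<d. \<forall>j<d. (\<lambda>t. outer (x t) (x t) i j) differentiable (at 0 within {0..\<epsilon>}))
          \<and> (\<forall>i<d. \<forall>j<d. (\<lambda>t. outer (y t) (y t) i j) differentiable (at 0 within {0..\<epsilon>}))"
  define f where "f t = trace_shift_clock d (outer (x t) (x t))" for t
  define g where "g t = trace_shift_clock_adj d (outer (y t) (y t))" for t
  have "f differentiable (at 0 within {0..\<epsilon>})" "g differentiable (at 0 within {0..\<epsilon>})"
    unfolding f_def g_def trace_shift_clock_def trace_shift_clock_adj_def using diff
    by (auto intro!: differentiable_sum differentiable_mult)
  moreover have "f 0 = 0"
    unfolding f_def using trace_shift_clock_outer_ket_0 assms(1) x0 .
  moreover have "g 0 = 0"
    unfolding g_def using trace_shift_clock_adj_outer_flat assms(1) y0 dft_ket_0 by simp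
  moreover have "\<forall>t\<in>{0..\<epsilon>}. f t * g t = of_real t"
    unfolding f_def g_def using wh_twirl_eq_imp_trace_shift_clock_product assms(1) twirl by blast
  ultimately show False
    using vanishing_differentiable_factors_not_id assms(2) by blast
qed

end
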